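(* Let $G$ and $H$ be Left dead-ends. Then $G\geq H$ if and only if $o(G^\circ+H)\leq\mathscr{P}$.
   Context: Games are finite partizan games; $\cong$ is identity of game trees; $o(G)$ is the misère outcome class (ordered $\mathscr{L}>\mathscr{N}>\mathscr{R}$, $\mathscr{L}>\mathscr{P}>\mathscr{R}$, with $\mathscr{N},\mathscr{P}$ incomparable). A universe is a set of games closed under options, disjunctive sums, conjugates, and forming $\{\mathscr{G}^L\mid\mathscr{G}^R\}$ from nonempty finite subsets of it; $G\geq_\mathcal{U}H$ means $o(G+X)\geq o(H+X)$ for all $X\in\mathcal{U}$. A Left dead-end is a game all of whose subpositions have no Left option. For Left dead-ends, $G\geq H$ means $G\geq_\mathcal{U}H$ for every universe $\mathcal{U}$. For a Left dead-end $G$, the adjoint is $G^\circ=*=\{0\mid0\}$ if $G\cong0$ and $G^\circ=\{(G^R)^\circ\mid 0\}$ otherwise, with $G^R$ ranging over the Right options of $G$. *)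

theory Defs
  imports "HOL-Library.FSet"
begin

text \<open>Finite partizan games as game trees: a game is given by its finite set of
Left options and its finite set of Right options.  Equality of this datatype is
identity of game trees.\<close>

datatype game = Game (lefts: "game fset") (rights: "game fset")

definition zero :: game where "zero = Game {||} {||}"

definition star :: game where "star = Game {|zero|} {|zero|}"

primrec conj :: "game \<Rightarrow> game" where
  "conj (Game L R) = Game (conj |`| R) (conj |`| L)"

text \<open>Disjunctive sum, defined by an outer recursion on the first summand and an
inner recursion on the second one.  sum_aux FL FR H receives the functions
(GL + _) for GL in the Left options (FL) and Right options (FR) of G and computes G + H.\<close>
primrec sum_aux :: "(game \<Rightarrow> game) fset \<Rightarrow> (game \<Rightarrow> game) fset \<Rightarrow> game \<Rightarrow> game" where
  "sum_aux FL FR (Game HL HR) =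
     Game ((\<lambda>f. f (Game HL HR)) |`| FL |\<union>| sum_aux FL FR |`| HL)
          ((\<lambda>f. f (Game HL HR)) |`| FR |\<union>| sum_aux FL FR |`| HR)"

primrec gsum :: "game \<Rightarrow> game \<Rightarrow> game" where
  "gsum (Game GL GR) = sum_aux (gsum |`| GL) (gsum |`| GR)"

lemma gsum_simp:
  "gsum (Game GL GR) (Game HL HR) =
     Game ((\<lambda>g. gsum g (Game HL HR)) |`| GL |\<union>| (\<lambda>h. gsum (Game GL GR) h) |`| HL)
          ((\<lambda>g. gsum g (Game HL HR)) |`| GR |\<union>| (\<lambda>h. gsum (Game GL GR) h) |`| HR)"
  by (simp add: fset.map_comp o_def)

text \<open>Misere play: a player who cannot move wins.
win G = (Left wins moving first in G, Right wins moving first in G).\<close>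
primrec win :: "game \<Rightarrow> bool \<times> bool" where
  "win (Game L R) =
     (L = {||} \<or> (\<exists>p \<in> fset (win |`| L). \<not> snd p),
      R = {||} \<or> (\<exists>p \<in> fset (win |`| R). \<not> fst p))"

datatype outcome = oL | oN | oP | oR

definition outc :: "game \<Rightarrow> outcome" where
  "outc G = (case win G of
      (True, True) \<Rightarrow> oN
    | (True, False) \<Rightarrow> oL
    | (False, True) \<Rightarrow> oR
    | (False, False) \<Rightarrow> oP)"

definition outcome_le :: "outcome \<Rightarrow> outcome \<Rightarrow> bool" where
  "outcome_le x y \<longleftrightarrow> x = y \<or> x = oR \<or> y = oL"

inductive_set subpositions :: "game \<Rightarrow> game set" for G where
  self: "G \<in> subpositions G"
| left: "K \<in> subpositions G \<Longrightarrow> K' |\<in>| lefts K \<Longrightarrow> K' \<in> subpositions G"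
| right: "K \<in> subpositions G \<Longrightarrow> K' |\<in>| rights K \<Longrightarrow> K' \<in> subpositions G"

definition left_dead_end :: "game \<Rightarrow> bool" where
  "left_dead_end G \<longleftrightarrow> (\<forall>K \<in> subpositions G. lefts K = {||})"

definition universe :: "game set \<Rightarrow> bool" where
  "universe U \<longleftrightarrow>
     (\<forall>G \<in> U. fset (lefts G) \<subseteq> U \<and> fset (rights G) \<subseteq> U) \<and>
     (\<forall>G \<in> U. \<forall>H \<in> U. gsum G H \<in> U) \<and>
     (\<forall>G \<in> U. conj G \<in> U) \<and>
     (\<forall>A B. A \<noteq> {||} \<longrightarrow> B \<noteq> {||} \<longrightarrow> fset A \<subseteq> U \<longrightarrow> fset B \<subseteq> U \<longrightarrow> Game A B \<in> U)"

definition ge_in :: "game set \<Rightarrow> game \<Rightarrow> game \<Rightarrow> bool" where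
  "ge_in U G H \<longleftrightarrow> (\<forall>X \<in> U. outcome_le (outc (gsum H X)) (outc (gsum G X)))"

text \<open>For Left dead-ends: G \<ge> H iff G \<ge>_U H for every universe U.\<close>
definition dead_end_ge :: "game \<Rightarrow> game \<Rightarrow> bool" where
  "dead_end_ge G H \<longleftrightarrow> (\<forall>U. universe U \<longrightarrow> ge_in U G H)"

primrec adjoint :: "game \<Rightarrow> game" where
  "adjoint (Game L R) =
     (if Game L R = zero then star else Game (adjoint |`| R) {|zero|})"

end

theory Submission
  imports Defs
begin

(* The adjoint is built so that Left, moving first, loses G + G\<^sup>\<circ>: her only moves are to
   g\<^sup>\<circ> + G for a Right option g of G, and Right answers with g\<^sup>\<circ> + g.  Since
   G \<ge> H must hold in the universe of all games, testing it against X = G\<^sup>\<circ> shows that Left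
   also loses H + G\<^sup>\<circ> moving first.
   Conversely, suppose Left loses G\<^sup>\<circ> + H moving first.  If G = 0 this forces H = 0.
   Otherwise, for each Right option g of G, Left's move to g\<^sup>\<circ> + H must have a winning reply
   by Right; the reply to 0 + H loses, because Left has no move in the dead-end H, so
   the reply is to g\<^sup>\<circ> + h for a Right option h of H.  The relation thus propagates to
   options, and copying strategies along it shows o(G + X) \<ge> o(H + X) for every game X. *)

abbreviation left_wins :: "game \<Rightarrow> bool" where "left_wins G \<equiv> fst (win G)"

abbreviation right_wins :: "game \<Rightarrow> bool" where "right_wins G \<equiv> snd (win G)"

lemma left_wins_iff: "left_wins G \<longleftrightarrow> lefts G = {||} \<or> (\<exists>g. g |\<in>| lefts G \<and> \<not> right_wins g)"
  by (cases G) auto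

lemma right_wins_iff: "right_wins G \<longleftrightarrow> rights G = {||} \<or> (\<exists>g. g |\<in>| rights G \<and> \<not> left_wins g)"
  by (cases G) auto

lemma outcome_le_outc_iff:
  "outcome_le (outc A) (outc B) \<longleftrightarrow> (left_wins A \<longrightarrow> left_wins B) \<and> (right_wins B \<longrightarrow> right_wins A)"
  unfolding outcome_le_def outc_def
  by (cases "win A"; cases "win B") (auto split: bool.splits)

lemma outcome_le_oP_iff: "outcome_le (outc A) oP \<longleftrightarrow> \<not> left_wins A"
  unfolding outcome_le_def outc_def by (cases "win A") (auto split: bool.splits)

lemma lefts_gsum: "lefts (gsum G H) = (\<lambda>g. gsum g H) |`| lefts G |\<union>| gsum G |`| lefts H"
  by (cases G; cases H) (simp only: gsum_simp game.sel)

lemma rights_gsum: "rights (gsum G H) = (\<lambda>g. gsum g H) |`| rights G |\<union>| gsum G |`| rights H"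
  by (cases G; cases H) (simp only: gsum_simp game.sel)

lemma left_wins_gsum_iff:
  "left_wins (gsum G H) \<longleftrightarrow> (lefts G = {||} \<and> lefts H = {||})
     \<or> (\<exists>g. g |\<in>| lefts G \<and> \<not> right_wins (gsum g H))
     \<or> (\<exists>h. h |\<in>| lefts H \<and> \<not> right_wins (gsum G h))"
  unfolding left_wins_iff[of "gsum G H"] lefts_gsum by auto

lemma right_wins_gsum_iff:
  "right_wins (gsum G H) \<longleftrightarrow> (rights G = {||} \<and> rights H = {||})
     \<or> (\<exists>g. g |\<in>| rights G \<and> \<not> left_wins (gsum g H))
     \<or> (\<exists>h. h |\<in>| rights H \<and> \<not> left_wins (gsum G h))"
  unfolding right_wins_iff[of "gsum G H"] rights_gsum by auto

lemma gsum_zero_left: "gsum zero H = H"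
proof (induction H)
  case (Game HL HR)
  then show ?case
    unfolding zero_def gsum_simp by (simp add: fset.map_ident_strong)
qed

lemma gsum_commute: "gsum G H = gsum H G"
proof (induction G arbitrary: H)
  case (Game GL GR)
  note IH_G = Game
  show ?case
  proof (induction H)
    case (Game HL HR)
    have "(\<lambda>g. gsum g (Game HL HR)) |`| GL = gsum (Game HL HR) |`| GL"
      "(\<lambda>g. gsum g (Game HL HR)) |`| GR = gsum (Game HL HR) |`| GR"
      using IH_G by (auto intro!: fset.map_cong0 simp del: gsum.simps)
    moreover have "gsum (Game GL GR) |`| HL = (\<lambda>h. gsum h (Game GL GR)) |`| HL"
      "gsum (Game GL GR) |`| HR = (\<lambda>h. gsum h (Game GL GR)) |`| HR"
      using Game by (auto intro!: fset.map_cong0 simp del: gsum.simps)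
    ultimately show ?case
      by (simp only: gsum_simp funion_commute)
  qed
qed

declare gsum.simps [simp del]

lemma universe_UNIV: "universe UNIV"
  unfolding universe_def by simp

lemma subpositions_trans: "K \<in> subpositions G \<Longrightarrow> G \<in> subpositions J \<Longrightarrow> K \<in> subpositions J"
  by (induction rule: subpositions.induct) (auto intro: subpositions.intros)

lemma left_dead_end_lefts: "left_dead_end G \<Longrightarrow> lefts G = {||}"
  unfolding left_dead_end_def using subpositions.self by blast

lemma left_dead_end_right_option: "left_dead_end G \<Longrightarrow> g |\<in>| rights G \<Longrightarrow> left_dead_end g"
  unfolding left_dead_end_def
  by (meson subpositions_trans subpositions.right subpositions.self)

lemma left_dead_end_left_wins: "left_dead_end G \<Longrightarrow> left_wins G"
  using left_dead_end_lefts left_wins_iff by blast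

lemma left_dead_end_right_wins_iff: "left_dead_end G \<Longrightarrow> right_wins G \<longleftrightarrow> rights G = {||}"
  using right_wins_iff left_dead_end_left_wins left_dead_end_right_option by blast

lemma rights_adjoint: "rights (adjoint G) = {|zero|}"
  by (cases G) (simp add: star_def)

lemma adjoint_left_dead_end:
  assumes "left_dead_end G"
  shows "adjoint G = (if rights G = {||} then star else Game (adjoint |`| rights G) {|zero|})"
proof (cases G)
  case (Game L R)
  with left_dead_end_lefts[OF assms] show ?thesis
    by (auto simp: zero_def)
qed

lemma left_wins_gsum_star_iff: "lefts H = {||} \<Longrightarrow> left_wins (gsum star H) \<longleftrightarrow> \<not> right_wins H"
  unfolding left_wins_gsum_iff star_def by (simp add: gsum_zero_left del: gsum.simps)

definition left_loses_adjoint_sum :: "game \<Rightarrow> game \<Rightarrow> bool" where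
  "left_loses_adjoint_sum G H \<longleftrightarrow>
     left_dead_end G \<and> left_dead_end H \<and> \<not> left_wins (gsum (adjoint G) H)"

lemma left_loses_adjoint_sum_refl:
  "left_dead_end G \<Longrightarrow> left_loses_adjoint_sum G G"
proof (induction G)
  case (Game L R)
  have L: "L = {||}"
    using left_dead_end_lefts[OF Game.prems] by simp
  show ?case
  proof (cases "R = {||}")
    case True
    then have "adjoint (Game L R) = star" and "right_wins (Game L R)"
      using adjoint_left_dead_end[OF Game.prems] by simp_all
    with Game.prems L show ?thesis
      unfolding left_loses_adjoint_sum_def by (simp add: left_wins_gsum_star_iff)
  next
    case False
    then have adj: "adjoint (Game L R) = Game (adjoint |`| R) {|zero|}"
      using adjoint_left_dead_end[OF Game.prems] by simp
    have "right_wins (gsum (adjoint r) (Game L R))" if "r |\<in>| R" for r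
      using that Game.IH(2)[of r] left_dead_end_right_option[OF Game.prems]
      unfolding right_wins_gsum_iff left_loses_adjoint_sum_def by auto
    with False L Game.prems show ?thesis
      unfolding left_loses_adjoint_sum_def adj left_wins_gsum_iff by auto
  qed
qed

lemma left_loses_adjoint_sum_zero:
  assumes "left_loses_adjoint_sum G H" and "rights G = {||}"
  shows "G = H"
proof -
  have G: "left_dead_end G" and H: "left_dead_end H"
    and lose: "\<not> left_wins (gsum (adjoint G) H)"
    using assms(1) unfolding left_loses_adjoint_sum_def by auto
  have "right_wins H"
    using lose assms(2) left_dead_end_lefts[OF H]
    by (simp add: adjoint_left_dead_end[OF G] left_wins_gsum_star_iff)
  then have "rights H = {||}"
    using left_dead_end_right_wins_iff[OF H] by simp
  with assms(2) left_dead_end_lefts[OF G] left_dead_end_lefts[OF H] show "G = H"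
    by (metis game.collapse)
qed

lemma left_loses_adjoint_sum_right_option:
  assumes "left_loses_adjoint_sum G H" and "g |\<in>| rights G"
  obtains h where "h |\<in>| rights H" and "left_loses_adjoint_sum g h"
proof -
  have G: "left_dead_end G" and H: "left_dead_end H"
    and lose: "\<not> left_wins (gsum (adjoint G) H)"
    using assms(1) unfolding left_loses_adjoint_sum_def by auto
  have "adjoint G = Game (adjoint |`| rights G) {|zero|}"
    using assms(2) adjoint_left_dead_end[OF G] by auto
  then have "right_wins (gsum (adjoint g) H)"
    using lose assms(2) unfolding left_wins_gsum_iff by auto
  \<comment> \<open>Right's reply from adjoint g to 0 leaves Left to move in the dead-end H, where she wins.\<close>
  then obtain h where "h |\<in>| rights H" "\<not> left_wins (gsum (adjoint g) h)"
    unfolding right_wins_gsum_iff rights_adjoint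
    using gsum_zero_left left_dead_end_left_wins H by auto
  with that G H assms(2) show thesis
    unfolding left_loses_adjoint_sum_def by (meson left_dead_end_right_option)
qed

lemma left_loses_adjoint_sum_outcome_le:
  "left_loses_adjoint_sum G H \<Longrightarrow> outcome_le (outc (gsum H X)) (outc (gsum G X))"
proof (induction X arbitrary: G H)
  case (Game XL XR)
  note IH_X = Game.IH
  from Game.prems show ?case
  proof (induction G arbitrary: H)
    case (Game GL GR)
    let ?G = "Game GL GR" and ?X = "Game XL XR"
    have "left_dead_end ?G" "left_dead_end H"
      using Game.prems unfolding left_loses_adjoint_sum_def by auto
    then have GL: "GL = {||}" and lefts_H: "lefts H = {||}"
      using left_dead_end_lefts by fastforce+
    have IH_X_opt: "outcome_le (outc (gsum H x)) (outc (gsum ?G x))" if "x |\<in>| XL |\<union>| XR" for x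
      using that IH_X Game.prems by auto
    have "left_wins (gsum ?G ?X)" if "left_wins (gsum H ?X)"
      using that IH_X_opt GL lefts_H
      unfolding left_wins_gsum_iff outcome_le_outc_iff by auto
    moreover have "right_wins (gsum H ?X)" if Right: "right_wins (gsum ?G ?X)"
      using Right[unfolded right_wins_gsum_iff game.sel]
    proof (elim disjE conjE exE)
      assume "GR = {||}" "XR = {||}"
      with Game.prems Right show ?thesis
        using left_loses_adjoint_sum_zero by fastforce
    next
      fix g assume g: "g |\<in>| GR" "\<not> left_wins (gsum g ?X)"
      obtain h where "h |\<in>| rights H" "left_loses_adjoint_sum g h"
        using left_loses_adjoint_sum_right_option[OF Game.prems] g(1) by auto
      with g Game.IH(2)[of g h] show ?thesis
        unfolding right_wins_gsum_iff[of H] outcome_le_outc_iff by auto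
    next
      fix x assume "x |\<in>| XR" "\<not> left_wins (gsum ?G x)"
      with IH_X_opt[of x] show ?thesis
        unfolding right_wins_gsum_iff[of H] outcome_le_outc_iff by auto
    qed
    ultimately show ?case
      unfolding outcome_le_outc_iff by blast
  qed
qed

theorem mainTheorem16:
  assumes "left_dead_end G" and "left_dead_end H"
  shows "dead_end_ge G H \<longleftrightarrow> outcome_le (outc (gsum (adjoint G) H)) oP"
proof
  assume "dead_end_ge G H"
  then have "ge_in UNIV G H"
    using universe_UNIV unfolding dead_end_ge_def by blast
  then have "outcome_le (outc (gsum H (adjoint G))) (outc (gsum G (adjoint G)))"
    unfolding ge_in_def by blast
  moreover have "\<not> left_wins (gsum G (adjoint G))"
    using left_loses_adjoint_sum_refl[OF assms(1)] gsum_commute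
    unfolding left_loses_adjoint_sum_def by metis
  ultimately show "outcome_le (outc (gsum (adjoint G) H)) oP"
    unfolding outcome_le_outc_iff outcome_le_oP_iff by (metis gsum_commute)
next
  assume "outcome_le (outc (gsum (adjoint G) H)) oP"
  with assms have "left_loses_adjoint_sum G H"
    unfolding left_loses_adjoint_sum_def outcome_le_oP_iff by blast
  then show "dead_end_ge G H"
    unfolding dead_end_ge_def ge_in_def
    using left_loses_adjoint_sum_outcome_le by blast
qed

end
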